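(* Let $\mathbf H$ be a random vector and let $\varepsilon,\varepsilon_1,\dots,\varepsilon_p$ be mean-zero random variables and $V\sim\mathrm{Uniform}(0,1)$, all mutually independent and independent of $\mathbf H$. Let $f,f_2,\dots,f_{p+1},g,g_1,\dots,g_{p+1}$ be measurable functions and define $X_1=g_1(\mathbf H)+\varepsilon_1$, $X_j=f_j(X_1,\dots,X_{j-1})+g_j(\mathbf H)+\varepsilon_j$ for $j=2,\dots,p$, $D=\mathbf 1\{V\le \pi(\mathbf X,\mathbf H)\}$ with $\pi(\mathbf X,\mathbf H)=\big[(1+\exp(f_{p+1}(X_1,\dots,X_p)))(1+\exp(g_{p+1}(\mathbf H)))\big]^{-1}$ (so $\mathbb P(D=1\mid\mathbf X,\mathbf H)=\pi(\mathbf X,\mathbf H)$), and $Y=f(X_1,\dots,X_p,D)+g(\mathbf H)+\varepsilon$, assuming all the random variables involved are integrable. Then $Y-\mathbb E[Y\mid\mathbf H]$ is conditionally independent of $\mathbf H$ given $(\mathbf X,\mathbb E[\mathbf X\mid\mathbf H],\mathbb E[D\mid\mathbf H],D)$; that is, the proxy sufficiency condition ($Y-S_Y\perp\mathbf H\mid(\mathbf X,\mathbf S_{-Y},D)$ with $S_Y=\mathbb E[Y\mid\mathbf H]$, $\mathbf S_{-Y}=\mathbb E[(\mathbf X^\top,D)^\top\mid\mathbf H]$) holds for this model.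
   Context: $\mathbf X=(X_1,\dots,X_p)$ are observed covariates, $D\in\{0,1\}$ the treatment, $Y$ the outcome, $\mathbf H$ an unmeasured confounder. *)

theory Defs
  imports "HOL-Probability.Probability"
begin

definition cond_indep ::
  "'a measure \<Rightarrow> 'b measure \<Rightarrow> ('a \<Rightarrow> 'b) \<Rightarrow> 'c measure \<Rightarrow> ('a \<Rightarrow> 'c)
     \<Rightarrow> 'd measure \<Rightarrow> ('a \<Rightarrow> 'd) \<Rightarrow> bool" where
  "cond_indep M MA A MB B MC C \<longleftrightarrow>
     (\<forall>S\<in>sets MA. \<forall>T\<in>sets MB. AE \<omega> in M.
        real_cond_exp M (vimage_algebra (space M) C MC)
          (indicator (A -` S \<inter> B -` T \<inter> space M)) \<omega>
        = real_cond_exp M (vimage_algebra (space M) C MC) (indicator (A -` S \<inter> space M)) \<omega>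
          * real_cond_exp M (vimage_algebra (space M) C MC) (indicator (B -` T \<inter> space M)) \<omega>)"

end

theory Submission
  imports Defs
begin

text \<open>
  Every variable of the model is a measurable function of the confounder \<open>H\<close> and of the noise
  vector \<open>N = (\<epsilon>, \<epsilon>\<^sub>1, \<dots>, \<epsilon>\<^sub>p, V)\<close>, which is independent of \<open>H\<close>; so conditioning on \<open>H\<close>
  amounts to integrating out \<open>N\<close>. This gives
  \<open>E[X\<^sub>j | H] = \<kappa>\<^sub>j(g\<^sub>1(H), \<dots>, g\<^sub>j\<^sub>-\<^sub>1(H)) + g\<^sub>j(H)\<close> and
  \<open>E[D | H] = k(g\<^sub>1(H), \<dots>, g\<^sub>p(H)) / (1 + exp g\<^sub>p\<^sub>+\<^sub>1(H))\<close> with \<open>k > 0\<close>. These equations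
  can be solved one after another for \<open>g\<^sub>1(H), \<dots>, g\<^sub>p\<^sub>+\<^sub>1(H)\<close>, hence
  \<open>E[Y | H] = m(g(H)) + g\<^sub>Y(H)\<close> is a function of the conditioning vector
  \<open>C = (X, E[X | H], E[D | H], D)\<close> and \<open>Y - E[Y | H] = r(C) + \<epsilon>\<close>. As \<open>(C, H)\<close> is a function
  of \<open>H\<close> and of the noise coordinates other than \<open>\<epsilon>\<close>, \<open>P(r(C) + \<epsilon> \<in> S | C, H)\<close> depends on
  \<open>C\<close> only, which is the claimed conditional independence.
\<close>

section \<open>Conditional expectations and conditional independence\<close>

lemma integral_PiM_insert_bounded:
  fixes f :: "('i \<Rightarrow> 'b) \<Rightarrow> real"
  assumes prob: "\<And>i. prob_space (Mi i)" and "finite R" "k \<notin> R"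
    and f: "f \<in> borel_measurable (PiM (insert k R) Mi)" and bound: "\<And>x. \<bar>f x\<bar> \<le> B"
  shows "(\<integral>x. f x \<partial>PiM (insert k R) Mi) = (\<integral>x. (\<integral>y. f (x(k := y)) \<partial>Mi k) \<partial>PiM R Mi)"
proof -
  interpret product_sigma_finite Mi
    unfolding product_sigma_finite_def using prob by (auto intro: prob_space_imp_sigma_finite)
  interpret prob_space "PiM (insert k R) Mi"
    using prob by (rule prob_space_PiM)
  have "integrable (PiM (insert k R) Mi) f"
    using f bound by (intro integrable_const_bound[where B=B]) auto
  with assms show ?thesis
    by (intro product_integral_insert) auto
qed

lemma (in sigma_finite_measure) borel_measurable_integral_snd:
  fixes \<phi> :: "'b \<Rightarrow> 'a \<Rightarrow> real"
  assumes sets: "sets M = sets MN" and \<phi>: "(\<lambda>(h, n). \<phi> h n) \<in> borel_measurable (MH \<Otimes>\<^sub>M MN)"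
  shows "(\<lambda>h. \<integral>n. \<phi> h n \<partial>M) \<in> borel_measurable MH"
proof -
  have eq: "sets (MH \<Otimes>\<^sub>M M) = sets (MH \<Otimes>\<^sub>M MN)"
    using sets by (intro sets_pair_measure_cong) simp_all
  have "(\<lambda>(h, n). \<phi> h n) \<in> borel_measurable (MH \<Otimes>\<^sub>M M)"
    by (subst measurable_cong_sets[OF eq refl]) (fact \<phi>)
  then show ?thesis by (rule borel_measurable_lebesgue_integral)
qed

lemma (in sigma_finite_subalgebra) real_cond_exp_add3:
  assumes "integrable M A" "integrable M B" "integrable M C"
    and Zm: "Z \<in> borel_measurable M" and Z: "\<And>\<omega>. \<omega> \<in> space M \<Longrightarrow> Z \<omega> = A \<omega> + B \<omega> + C \<omega>"
  shows "AE \<omega> in M. real_cond_exp M F Z \<omega>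
           = real_cond_exp M F A \<omega> + real_cond_exp M F B \<omega> + real_cond_exp M F C \<omega>"
proof -
  have [measurable]: "A \<in> borel_measurable M" "B \<in> borel_measurable M" "C \<in> borel_measurable M"
    using assms by (auto intro: borel_measurable_integrable)
  have "AE \<omega> in M. real_cond_exp M F Z \<omega> = real_cond_exp M F (\<lambda>\<omega>. (A \<omega> + B \<omega>) + C \<omega>) \<omega>"
    by (rule real_cond_exp_cong) (auto simp: Z Zm)
  moreover have "AE \<omega> in M. real_cond_exp M F (\<lambda>\<omega>. (A \<omega> + B \<omega>) + C \<omega>) \<omega>
      = real_cond_exp M F (\<lambda>\<omega>. A \<omega> + B \<omega>) \<omega> + real_cond_exp M F C \<omega>"
    using assms by (intro real_cond_exp_add) auto
  moreover have "AE \<omega> in M. real_cond_exp M F (\<lambda>\<omega>. A \<omega> + B \<omega>) \<omega>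
      = real_cond_exp M F A \<omega> + real_cond_exp M F B \<omega>"
    using assms by (intro real_cond_exp_add) auto
  ultimately show ?thesis by eventually_elim simp
qed

context prob_space
begin

lemma sigma_finite_subalgebra_vimage_algebra:
  assumes "f \<in> measurable M N"
  shows "sigma_finite_subalgebra M (vimage_algebra (space M) f N)"
proof -
  have "subalgebra M (vimage_algebra (space M) f N)"
    unfolding subalgebra_def using assms sets_image_in_sets[of M "space M" f N] by simp
  then interpret finite_measure_subalgebra M "vimage_algebra (space M) f N"
    by unfold_locales
  show ?thesis by (rule finite_measure_subalgebra_is_sigma_finite) unfold_locales
qed

lemma distr_pair_eq_pair_distr:
  assumes H: "H \<in> measurable M MH" and N: "N \<in> measurable M MN"
    and indep: "indep_set (sets (vimage_algebra (space M) N MN))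
      (sets (vimage_algebra (space M) H MH))"
  shows "distr M MH H \<Otimes>\<^sub>M distr M MN N = distr M (MH \<Otimes>\<^sub>M MN) (\<lambda>\<omega>. (H \<omega>, N \<omega>))"
proof (rule pair_measure_eqI)
  show "sigma_finite_measure (distr M MH H)" "sigma_finite_measure (distr M MN N)"
    using H N by (auto intro!: prob_space_imp_sigma_finite prob_space_distr)
  show "sets (distr M MH H \<Otimes>\<^sub>M distr M MN N) = sets (distr M (MH \<Otimes>\<^sub>M MN) (\<lambda>\<omega>. (H \<omega>, N \<omega>)))"
    unfolding sets_distr by (rule sets_pair_measure_cong) simp_all
  fix A B assume "A \<in> sets (distr M MH H)" and "B \<in> sets (distr M MN N)"
  then have A: "A \<in> sets MH" and B: "B \<in> sets MN" by simp_all
  have prod: "prob ((N -` B \<inter> space M) \<inter> (H -` A \<inter> space M))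
      = prob (N -` B \<inter> space M) * prob (H -` A \<inter> space M)"
    using indep in_vimage_algebra[OF A] in_vimage_algebra[OF B] unfolding indep_sets2_eq by blast
  have "(\<lambda>\<omega>. (H \<omega>, N \<omega>)) -` (A \<times> B) \<inter> space M = (N -` B \<inter> space M) \<inter> (H -` A \<inter> space M)"
    by auto
  with A B H N prod show "emeasure (distr M MH H) A * emeasure (distr M MN N) B
      = emeasure (distr M (MH \<Otimes>\<^sub>M MN) (\<lambda>\<omega>. (H \<omega>, N \<omega>))) (A \<times> B)"
    by (simp add: emeasure_distr measurable_Pair emeasure_eq_measure ennreal_mult' mult.commute)
qed

context
  fixes MH :: "'b measure" and MN :: "'c measure" and H :: "'a \<Rightarrow> 'b" and N :: "'a \<Rightarrow> 'c"
  assumes H [measurable]: "H \<in> measurable M MH" and N [measurable]: "N \<in> measurable M MN"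
    and indep: "distr M MH H \<Otimes>\<^sub>M distr M MN N = distr M (MH \<Otimes>\<^sub>M MN) (\<lambda>\<omega>. (H \<omega>, N \<omega>))"
begin

lemma integral_indep_pair:
  fixes \<phi> :: "'b \<times> 'c \<Rightarrow> real"
  assumes [measurable]: "\<phi> \<in> borel_measurable (MH \<Otimes>\<^sub>M MN)"
    and int: "integrable M (\<lambda>\<omega>. \<phi> (H \<omega>, N \<omega>))"
  shows "integrable M (\<lambda>\<omega>. \<integral>n. \<phi> (H \<omega>, n) \<partial>distr M MN N)"
    and "(\<integral>\<omega>. \<phi> (H \<omega>, N \<omega>) \<partial>M) = (\<integral>\<omega>. (\<integral>n. \<phi> (H \<omega>, n) \<partial>distr M MN N) \<partial>M)"
proof -
  interpret LH: prob_space "distr M MH H" by (rule prob_space_distr) simp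
  interpret LN: prob_space "distr M MN N" by (rule prob_space_distr) simp
  interpret pair_sigma_finite "distr M MH H" "distr M MN N" ..
  have [measurable]: "(\<lambda>h. \<integral>n. \<phi> (h, n) \<partial>distr M MN N) \<in> borel_measurable MH"
    by (rule LN.borel_measurable_integral_snd[where MN=MN])
      (simp_all only: sets_distr case_prod_eta assms(1))
  have int_pair: "integrable (distr M MH H \<Otimes>\<^sub>M distr M MN N) \<phi>"
    unfolding indep by (subst integrable_distr_eq) (simp_all add: int)
  have "integrable (distr M MH H) (\<lambda>h. \<integral>n. \<phi> (h, n) \<partial>distr M MN N)"
    by (rule integrable_fst'[OF int_pair])
  then show "integrable M (\<lambda>\<omega>. \<integral>n. \<phi> (H \<omega>, n) \<partial>distr M MN N)"
    by (subst (asm) integrable_distr_eq) simp_all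
  have "(\<integral>\<omega>. \<phi> (H \<omega>, N \<omega>) \<partial>M) = integral\<^sup>L (distr M MH H \<Otimes>\<^sub>M distr M MN N) \<phi>"
    unfolding indep by (subst integral_distr) simp_all
  also have "\<dots> = (\<integral>h. (\<integral>n. \<phi> (h, n) \<partial>distr M MN N) \<partial>distr M MH H)"
    by (rule integral_fst'[symmetric, OF int_pair])
  also have "\<dots> = (\<integral>\<omega>. (\<integral>n. \<phi> (H \<omega>, n) \<partial>distr M MN N) \<partial>M)"
    by (subst integral_distr) simp_all
  finally show "(\<integral>\<omega>. \<phi> (H \<omega>, N \<omega>) \<partial>M) = (\<integral>\<omega>. (\<integral>n. \<phi> (H \<omega>, n) \<partial>distr M MN N) \<partial>M)" .
qed

lemma real_cond_exp_indep_pair: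
  fixes \<phi> :: "'b \<times> 'c \<Rightarrow> real"
  assumes [measurable]: "\<phi> \<in> borel_measurable (MH \<Otimes>\<^sub>M MN)"
    and int: "integrable M (\<lambda>\<omega>. \<phi> (H \<omega>, N \<omega>))"
  shows "AE \<omega> in M. real_cond_exp M (vimage_algebra (space M) H MH) (\<lambda>\<omega>. \<phi> (H \<omega>, N \<omega>)) \<omega>
           = (\<integral>n. \<phi> (H \<omega>, n) \<partial>distr M MN N)"
proof -
  let ?FH = "vimage_algebra (space M) H MH"
  interpret sigma_finite_subalgebra M ?FH
    by (rule sigma_finite_subalgebra_vimage_algebra) simp
  interpret LN: prob_space "distr M MN N" by (rule prob_space_distr) simp
  have H_FH: "H \<in> measurable ?FH MH"
    by (rule measurable_vimage_algebra1) (use H in \<open>auto simp: measurable_def\<close>)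
  show ?thesis
  proof (rule real_cond_exp_charact)
    show "integrable M (\<lambda>\<omega>. \<phi> (H \<omega>, N \<omega>))" by (rule int)
    show "integrable M (\<lambda>\<omega>. \<integral>n. \<phi> (H \<omega>, n) \<partial>distr M MN N)"
      by (rule integral_indep_pair(1)) (simp_all add: int)
    show "(\<lambda>\<omega>. \<integral>n. \<phi> (H \<omega>, n) \<partial>distr M MN N) \<in> borel_measurable ?FH"
      using measurable_compose[OF H_FH LN.borel_measurable_integral_snd] by simp
    fix A assume "A \<in> sets ?FH"
    then obtain T where T [measurable]: "T \<in> sets MH" and A: "A = H -` T \<inter> space M"
      using H by (subst (asm) sets_vimage_algebra2) (auto simp: measurable_def)
    define \<phi>T where "\<phi>T = (\<lambda>(h, n). indicator T h * \<phi> (h, n))"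
    have [measurable]: "\<phi>T \<in> borel_measurable (MH \<Otimes>\<^sub>M MN)"
      unfolding \<phi>T_def by measurable
    have ind: "\<And>\<omega>. \<omega> \<in> space M \<Longrightarrow> indicator A \<omega> = (indicator T (H \<omega>) :: real)"
      unfolding A by (auto split: split_indicator)
    have "A \<in> sets M"
      unfolding A by (rule measurable_sets[OF H T])
    then have "integrable M (\<lambda>\<omega>. indicator A \<omega> * \<phi> (H \<omega>, N \<omega>))"
      using integrable_mult_indicator[of A M "\<lambda>\<omega>. \<phi> (H \<omega>, N \<omega>)"] int by simp
    then have int_T: "integrable M (\<lambda>\<omega>. \<phi>T (H \<omega>, N \<omega>))"
      by (rule Bochner_Integration.integrable_cong[OF refl, THEN iffD1, rotated])
        (simp add: \<phi>T_def ind)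
    have "(\<integral>\<omega>\<in>A. \<phi> (H \<omega>, N \<omega>) \<partial>M) = (\<integral>\<omega>. \<phi>T (H \<omega>, N \<omega>) \<partial>M)"
      unfolding set_lebesgue_integral_def
      by (rule Bochner_Integration.integral_cong) (auto simp: \<phi>T_def ind)
    also have "\<dots> = (\<integral>\<omega>. (\<integral>n. \<phi>T (H \<omega>, n) \<partial>distr M MN N) \<partial>M)"
      by (rule integral_indep_pair(2)) (simp_all add: int_T)
    also have "\<dots> = (\<integral>\<omega>\<in>A. (\<integral>n. \<phi> (H \<omega>, n) \<partial>distr M MN N) \<partial>M)"
      unfolding set_lebesgue_integral_def
      by (rule Bochner_Integration.integral_cong) (auto simp: \<phi>T_def ind)
    finally show "(\<integral>\<omega>\<in>A. \<phi> (H \<omega>, N \<omega>) \<partial>M) = (\<integral>\<omega>\<in>A. (\<integral>n. \<phi> (H \<omega>, n) \<partial>distr M MN N) \<partial>M)" .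
  qed
qed

end

context
  fixes MA :: "'b measure" and MB :: "'c measure" and MC :: "'d measure"
    and A :: "'a \<Rightarrow> 'b" and B :: "'a \<Rightarrow> 'c" and C :: "'a \<Rightarrow> 'd" and \<psi> :: "'b set \<Rightarrow> 'd \<Rightarrow> real"
  assumes A [measurable]: "A \<in> measurable M MA" and B [measurable]: "B \<in> measurable M MB"
    and C [measurable]: "C \<in> measurable M MC"
    and \<psi>_measurable: "\<And>S. S \<in> sets MA \<Longrightarrow> \<psi> S \<in> borel_measurable MC"
    and \<psi>_bounded: "\<And>S c. S \<in> sets MA \<Longrightarrow> \<bar>\<psi> S c\<bar> \<le> 1"
    and \<psi>_integral: "\<And>S U T. S \<in> sets MA \<Longrightarrow> U \<in> sets MC \<Longrightarrow> T \<in> sets MB \<Longrightarrow>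
       (\<integral>\<omega>. indicator U (C \<omega>) * indicator T (B \<omega>) * indicator S (A \<omega>) \<partial>M)
       = (\<integral>\<omega>. indicator U (C \<omega>) * indicator T (B \<omega>) * \<psi> S (C \<omega>) \<partial>M)"
begin

lemma real_cond_exp_indicator_factor:
  assumes S [measurable]: "S \<in> sets MA" and T [measurable]: "T \<in> sets MB"
  shows "AE \<omega> in M.
    real_cond_exp M (vimage_algebra (space M) C MC) (indicator (A -` S \<inter> B -` T \<inter> space M)) \<omega>
    = \<psi> S (C \<omega>) * real_cond_exp M (vimage_algebra (space M) C MC) (indicator (B -` T \<inter> space M)) \<omega>"
proof -
  let ?FC = "vimage_algebra (space M) C MC"
  interpret sigma_finite_subalgebra M ?FC
    by (rule sigma_finite_subalgebra_vimage_algebra) simp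
  have C_FC: "C \<in> measurable ?FC MC"
    by (rule measurable_vimage_algebra1) (use C in \<open>auto simp: measurable_def\<close>)
  have \<psi>_FC [measurable]: "(\<lambda>\<omega>. \<psi> S (C \<omega>)) \<in> borel_measurable ?FC"
    using measurable_compose[OF C_FC \<psi>_measurable[OF S]] .
  have \<psi>_M [measurable]: "(\<lambda>\<omega>. \<psi> S (C \<omega>)) \<in> borel_measurable M"
    using measurable_compose[OF C \<psi>_measurable[OF S]] .
  have [measurable]: "A -` S \<inter> B -` T \<inter> space M \<in> sets M"
  proof -
    have "A -` S \<inter> B -` T \<inter> space M = (A -` S \<inter> space M) \<inter> (B -` T \<inter> space M)"
      by auto
    then show ?thesis using measurable_sets[OF A S] measurable_sets[OF B T] by auto
  qed
  let ?fB = "indicator (B -` T \<inter> space M) :: 'a \<Rightarrow> real"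
  have int_\<psi>B: "integrable M (\<lambda>\<omega>. \<psi> S (C \<omega>) * ?fB \<omega>)"
    using \<psi>_bounded[OF S] by (intro integrable_const_bound[where B=1]) (auto split: split_indicator)
  show ?thesis
  proof (rule real_cond_exp_charact)
    show "integrable M (indicator (A -` S \<inter> B -` T \<inter> space M) :: 'a \<Rightarrow> real)"
      by (intro integrable_const_bound[where B=1]) (auto split: split_indicator)
    show "integrable M (\<lambda>\<omega>. \<psi> S (C \<omega>) * real_cond_exp M ?FC ?fB \<omega>)"
      by (rule real_cond_exp_intg(1)[OF int_\<psi>B]) simp_all
    show "(\<lambda>\<omega>. \<psi> S (C \<omega>) * real_cond_exp M ?FC ?fB \<omega>) \<in> borel_measurable ?FC"
      by measurable
    fix E assume "E \<in> sets ?FC"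
    then obtain U where U [measurable]: "U \<in> sets MC" and E: "E = C -` U \<inter> space M"
      using C by (subst (asm) sets_vimage_algebra2) (auto simp: measurable_def)
    have [measurable]: "E \<in> sets ?FC" by fact
    have [measurable]: "E \<in> sets M" unfolding E by (rule measurable_sets[OF C U])
    have ind: "\<And>\<omega>. \<omega> \<in> space M \<Longrightarrow> indicator E \<omega> = (indicator U (C \<omega>) :: real)"
      unfolding E by (auto split: split_indicator)
    have int_E\<psi>B: "integrable M (\<lambda>\<omega>. (indicator E \<omega> * \<psi> S (C \<omega>)) * ?fB \<omega>)"
      using \<psi>_bounded[OF S] by (intro integrable_const_bound[where B=1])
        (auto simp: abs_mult split: split_indicator)
    have "(\<integral>\<omega>\<in>E. indicator (A -` S \<inter> B -` T \<inter> space M) \<omega> \<partial>M)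
        = (\<integral>\<omega>. indicator U (C \<omega>) * indicator T (B \<omega>) * (indicator S (A \<omega>) :: real) \<partial>M)"
      unfolding set_lebesgue_integral_def
      by (rule Bochner_Integration.integral_cong) (auto simp: ind split: split_indicator)
    also have "\<dots> = (\<integral>\<omega>. indicator U (C \<omega>) * indicator T (B \<omega>) * \<psi> S (C \<omega>) \<partial>M)"
      by (rule \<psi>_integral) simp_all
    also have "\<dots> = (\<integral>\<omega>. (indicator E \<omega> * \<psi> S (C \<omega>)) * ?fB \<omega> \<partial>M)"
      by (rule Bochner_Integration.integral_cong) (auto simp: ind split: split_indicator)
    also have "\<dots> = (\<integral>\<omega>. (indicator E \<omega> * \<psi> S (C \<omega>)) * real_cond_exp M ?FC ?fB \<omega> \<partial>M)"
      by (rule real_cond_exp_intg(2)[OF int_E\<psi>B, symmetric]) simp_all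
    also have "\<dots> = (\<integral>\<omega>\<in>E. \<psi> S (C \<omega>) * real_cond_exp M ?FC ?fB \<omega> \<partial>M)"
      unfolding set_lebesgue_integral_def by (simp add: mult.assoc)
    finally show "(\<integral>\<omega>\<in>E. indicator (A -` S \<inter> B -` T \<inter> space M) \<omega> \<partial>M)
        = (\<integral>\<omega>\<in>E. \<psi> S (C \<omega>) * real_cond_exp M ?FC ?fB \<omega> \<partial>M)" .
  qed
qed

text \<open>Conditional independence of \<open>A\<close> and \<open>B\<close> given \<open>C\<close> follows once
  \<open>P(A \<in> S | B, C)\<close> is a function \<open>\<psi> S\<close> of \<open>C\<close> alone.\<close>

lemma cond_indepI_cond_prob: "cond_indep M MA A MB B MC C"
  unfolding cond_indep_def
proof (intro ballI)
  let ?FC = "vimage_algebra (space M) C MC"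
  interpret sigma_finite_subalgebra M ?FC
    by (rule sigma_finite_subalgebra_vimage_algebra) simp
  fix S T assume S: "S \<in> sets MA" and T: "T \<in> sets MB"
  have "A -` S \<inter> B -` space MB \<inter> space M = A -` S \<inter> space M"
    using B by (auto simp: measurable_def)
  moreover have "B -` space MB \<inter> space M = space M"
    using B by (auto simp: measurable_def)
  moreover have "AE \<omega> in M. real_cond_exp M ?FC (indicator (space M)) \<omega> = (1::real)"
  proof -
    have "AE \<omega> in M. real_cond_exp M ?FC (indicator (space M)) \<omega> = real_cond_exp M ?FC (\<lambda>_. 1::real) \<omega>"
      by (rule real_cond_exp_cong) auto
    moreover have "AE \<omega> in M. real_cond_exp M ?FC (\<lambda>_. 1::real) \<omega> = 1"
      by (rule real_cond_exp_F_meas) auto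
    ultimately show ?thesis by eventually_elim simp
  qed
  ultimately have "AE \<omega> in M. real_cond_exp M ?FC (indicator (A -` S \<inter> space M)) \<omega> = \<psi> S (C \<omega>)"
    using real_cond_exp_indicator_factor[OF S sets.top[of MB]] by auto
  with real_cond_exp_indicator_factor[OF S T]
  show "AE \<omega> in M. real_cond_exp M ?FC (indicator (A -` S \<inter> B -` T \<inter> space M)) \<omega>
    = real_cond_exp M ?FC (indicator (A -` S \<inter> space M)) \<omega>
      * real_cond_exp M ?FC (indicator (B -` T \<inter> space M)) \<omega>"
    by eventually_elim simp
qed

end

end

section \<open>The structural equation model\<close>

text \<open>\<open>solve_X f j a n\<close> solves the first \<open>j\<close> structural equations
  \<open>X\<^sub>i = f\<^sub>i(X\<^sub>1, \<dots>, X\<^sub>i\<^sub>-\<^sub>1) + a\<^sub>i + n\<^sub>i\<close> (without \<open>f\<^sub>1\<close>), where \<open>a\<^sub>i\<close> stands for \<open>g\<^sub>i(H)\<close>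
  and \<open>n\<^sub>i\<close> for \<open>\<epsilon>\<^sub>i\<close>.\<close>

fun solve_X :: "(nat \<Rightarrow> (nat \<Rightarrow> real) \<Rightarrow> real) \<Rightarrow> nat \<Rightarrow> (nat \<Rightarrow> real) \<Rightarrow> (nat \<Rightarrow> real) \<Rightarrow> nat \<Rightarrow> real"
  where
    "solve_X f 0 a n = (\<lambda>i. 0)"
  | "solve_X f (Suc j) a n = (solve_X f j a n)(Suc j :=
       (if j = 0 then 0 else f (Suc j) (restrict (solve_X f j a n) {1..<Suc j}))
       + a (Suc j) + n (Suc j))"

lemma solve_X_cong:
  assumes "\<And>i. i \<in> {1..j} \<Longrightarrow> a i = a' i" and "\<And>i. i \<in> {1..j} \<Longrightarrow> n i = n' i"
  shows "solve_X f j a n = solve_X f j a' n'"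
  using assms
proof (induction j)
  case (Suc j)
  then have IH: "solve_X f j a n = solve_X f j a' n'" by simp
  show ?case unfolding solve_X.simps IH using Suc.prems by simp
qed simp

lemma solve_X_measurable:
  assumes f: "\<And>j. j \<in> {2..q} \<Longrightarrow> f j \<in> borel_measurable (PiM {1..<j} (\<lambda>_. borel))"
    and a: "\<And>i. i \<in> {1..j} \<Longrightarrow> (\<lambda>x. fa x i) \<in> borel_measurable Q"
    and n: "\<And>i. i \<in> {1..j} \<Longrightarrow> (\<lambda>x. fn x i) \<in> borel_measurable Q"
    and "j \<le> q"
  shows "(\<lambda>x. solve_X f j (fa x) (fn x) i) \<in> borel_measurable Q"
  using a n \<open>j \<le> q\<close>
proof (induction j arbitrary: i)
  case 0
  then show ?case by simp
next
  case (Suc j)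
  have IH: "\<And>i. (\<lambda>x. solve_X f j (fa x) (fn x) i) \<in> borel_measurable Q"
    using Suc by auto
  then have prefix: "(\<lambda>x. restrict (solve_X f j (fa x) (fn x)) {1..<Suc j})
      \<in> measurable Q (PiM {1..<Suc j} (\<lambda>_. borel))"
    by (intro measurable_restrict) simp
  have "(\<lambda>x. if j = 0 then 0 else f (Suc j) (restrict (solve_X f j (fa x) (fn x)) {1..<Suc j}))
      \<in> borel_measurable Q"
  proof (cases "j = 0")
    case False
    then have "Suc j \<in> {2..q}" using Suc.prems by auto
    with False show ?thesis using measurable_compose[OF prefix f] by simp
  qed simp
  moreover have "(\<lambda>x. fa x (Suc j)) \<in> borel_measurable Q" "(\<lambda>x. fn x (Suc j)) \<in> borel_measurable Q"
    using Suc.prems by auto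
  ultimately have "(\<lambda>x. (if j = 0 then 0
        else f (Suc j) (restrict (solve_X f j (fa x) (fn x)) {1..<Suc j}))
      + fa x (Suc j) + fn x (Suc j)) \<in> borel_measurable Q"
    by measurable
  then show ?case
    using IH[of i] by (cases "i = Suc j") auto
qed

definition inv_one_plus_exp :: "real \<Rightarrow> real" where
  "inv_one_plus_exp t = 1 / (1 + exp t)"

lemma inv_one_plus_exp_pos: "0 < inv_one_plus_exp t"
  unfolding inv_one_plus_exp_def by (simp add: add_pos_pos)

lemma inv_one_plus_exp_le_1: "inv_one_plus_exp t \<le> 1"
  unfolding inv_one_plus_exp_def using exp_gt_zero[of t]
  by (simp add: divide_le_eq not_less add_nonneg_nonneg)

lemma inv_one_plus_exp_measurable [measurable]: "inv_one_plus_exp \<in> borel_measurable borel"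
  unfolding inv_one_plus_exp_def by measurable

lemma integral_uniform_01_le:
  assumes "0 \<le> c" "c \<le> (1::real)"
  shows "(\<integral>y. (if y \<le> c then 1 else 0 :: real) \<partial>uniform_measure lborel {0..1}) = c"
proof -
  have "(\<lambda>y. (if y \<le> c then 1 else 0 :: real)) = indicator {..c}"
    by (auto simp: fun_eq_iff split: split_indicator)
  moreover have "{0..1} \<inter> {..c} = {0..c}" using assms by auto
  ultimately show ?thesis using assms by simp
qed

locale proxy_model = prob_space M for M :: "'a measure" +
  fixes p :: nat
    and H :: "'a \<Rightarrow> real ^ 'k"
    and eps V :: "'a \<Rightarrow> real"
    and epsX :: "nat \<Rightarrow> 'a \<Rightarrow> real"
    and fX :: "nat \<Rightarrow> (nat \<Rightarrow> real) \<Rightarrow> real"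
    and fY :: "(nat \<Rightarrow> real) \<Rightarrow> real \<Rightarrow> real"
    and gX :: "nat \<Rightarrow> real ^ 'k \<Rightarrow> real"
    and gY :: "real ^ 'k \<Rightarrow> real"
    and X :: "nat \<Rightarrow> 'a \<Rightarrow> real"
    and D Y :: "'a \<Rightarrow> real"
  assumes p: "1 \<le> p"
    and H_meas: "H \<in> borel_measurable M"
    and eps_meas: "eps \<in> borel_measurable M"
    and V_meas: "V \<in> borel_measurable M"
    and epsX_meas: "\<And>j. j \<in> {1..p} \<Longrightarrow> epsX j \<in> borel_measurable M"
    and indep_noise: "prob_space.indep_vars M (\<lambda>_. borel)
        (\<lambda>i. if i = 0 then eps else if i \<le> p then epsX i else V) {0..Suc p}"
    and indep_H: "prob_space.indep_set M
        (sets (vimage_algebra (space M)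
          (\<lambda>\<omega>. restrict (\<lambda>i. (if i = 0 then eps else if i \<le> p then epsX i else V) \<omega>) {0..Suc p})
          (PiM {0..Suc p} (\<lambda>_. borel))))
        (sets (vimage_algebra (space M) H borel))"
    and eps_int: "integrable M eps" and eps_mean: "prob_space.expectation M eps = 0"
    and epsX_int: "\<And>j. j \<in> {1..p} \<Longrightarrow> integrable M (epsX j)"
    and epsX_mean: "\<And>j. j \<in> {1..p} \<Longrightarrow> prob_space.expectation M (epsX j) = 0"
    and V_unif: "distr M borel V = uniform_measure lborel {0..1}"
    and fX_meas: "\<And>j. j \<in> {2..Suc p} \<Longrightarrow> fX j \<in> borel_measurable (PiM {1..<j} (\<lambda>_. borel))"
    and fY_meas: "(\<lambda>(x, d). fY x d) \<in> borel_measurable (PiM {1..p} (\<lambda>_. borel) \<Otimes>\<^sub>M borel)"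
    and gX_meas: "\<And>j. j \<in> {1..Suc p} \<Longrightarrow> gX j \<in> borel_measurable borel"
    and gY_meas: "gY \<in> borel_measurable borel"
    and X1: "\<And>\<omega>. \<omega> \<in> space M \<Longrightarrow> X 1 \<omega> = gX 1 (H \<omega>) + epsX 1 \<omega>"
    and Xj: "\<And>j \<omega>. j \<in> {2..p} \<Longrightarrow> \<omega> \<in> space M \<Longrightarrow>
        X j \<omega> = fX j (restrict (\<lambda>i. X i \<omega>) {1..<j}) + gX j (H \<omega>) + epsX j \<omega>"
    and D_def: "\<And>\<omega>. \<omega> \<in> space M \<Longrightarrow>
        D \<omega> = (if V \<omega> \<le> 1 / ((1 + exp (fX (Suc p) (restrict (\<lambda>i. X i \<omega>) {1..p})))
                               * (1 + exp (gX (Suc p) (H \<omega>)))) then 1 else 0)"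
    and Y_def: "\<And>\<omega>. \<omega> \<in> space M \<Longrightarrow>
        Y \<omega> = fY (restrict (\<lambda>i. X i \<omega>) {1..p}) (D \<omega>) + gY (H \<omega>) + eps \<omega>"
    and X_int: "\<And>j. j \<in> {1..p} \<Longrightarrow> integrable M (X j)"
    and Y_int: "integrable M Y"
    and D_int: "integrable M D"
    and fX_int: "\<And>j. j \<in> {2..p} \<Longrightarrow> integrable M (\<lambda>\<omega>. fX j (restrict (\<lambda>i. X i \<omega>) {1..<j}))"
    and fY_int: "integrable M (\<lambda>\<omega>. fY (restrict (\<lambda>i. X i \<omega>) {1..p}) (D \<omega>))"
    and gX_int: "\<And>j. j \<in> {1..p} \<Longrightarrow> integrable M (\<lambda>\<omega>. gX j (H \<omega>))"
    and gY_int: "integrable M (\<lambda>\<omega>. gY (H \<omega>))"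

context proxy_model
begin

definition noise :: "nat \<Rightarrow> 'a \<Rightarrow> real" where
  "noise i = (if i = 0 then eps else if i \<le> p then epsX i else V)"

definition noise_vec :: "'a \<Rightarrow> nat \<Rightarrow> real" where
  "noise_vec \<omega> = restrict (\<lambda>i. noise i \<omega>) {0..Suc p}"

abbreviation noise_space :: "(nat \<Rightarrow> real) measure" where
  "noise_space \<equiv> PiM {0..Suc p} (\<lambda>_. borel)"

abbreviation effect_space :: "(nat \<Rightarrow> real) measure" where
  "effect_space \<equiv> PiM {1..Suc p} (\<lambda>_. borel)"

definition noise_law :: "(nat \<Rightarrow> real) measure" where
  "noise_law = distr M noise_space noise_vec"

definition noise_marginal :: "nat \<Rightarrow> real measure" where
  "noise_marginal i = distr M borel (noise i)"

definition sigma_H :: "'a measure" where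
  "sigma_H = vimage_algebra (space M) H borel"

lemma noise_measurable [measurable]: "noise i \<in> borel_measurable M"
  using eps_meas V_meas epsX_meas unfolding noise_def by auto

lemma noise_vec_measurable [measurable]: "noise_vec \<in> measurable M noise_space"
  unfolding noise_vec_def by measurable

lemma noise_vec_apply: "i \<in> {0..Suc p} \<Longrightarrow> noise_vec \<omega> i = noise i \<omega>"
  unfolding noise_vec_def by simp

lemma noise_vec_0: "noise_vec \<omega> 0 = eps \<omega>"
  by (simp add: noise_vec_apply noise_def)

lemma noise_vec_epsX: "j \<in> {1..p} \<Longrightarrow> noise_vec \<omega> j = epsX j \<omega>"
  by (simp add: noise_vec_apply noise_def)

lemma noise_vec_V: "noise_vec \<omega> (Suc p) = V \<omega>"
  by (simp add: noise_vec_apply noise_def)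

lemma prob_space_noise_marginal: "prob_space (noise_marginal i)"
  unfolding noise_marginal_def by (rule prob_space_distr) simp

lemma noise_marginal_V: "noise_marginal (Suc p) = uniform_measure lborel {0..1}"
  unfolding noise_marginal_def noise_def using V_unif p by simp

lemma noise_law_eq_PiM: "noise_law = PiM {0..Suc p} noise_marginal"
proof -
  have "indep_vars (\<lambda>_. borel) noise {0..Suc p}"
    using indep_noise unfolding noise_def .
  then show ?thesis
    unfolding noise_law_def noise_marginal_def noise_vec_def
    by (subst (asm) indep_vars_iff_distr_eq_PiM') auto
qed

lemma prob_space_noise_law: "prob_space noise_law"
  unfolding noise_law_def by (rule prob_space_distr) simp

lemma sets_noise_law [measurable_cong]: "sets noise_law = sets noise_space"
  unfolding noise_law_def by simp

lemma H_noise_indep: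
  "distr M borel H \<Otimes>\<^sub>M distr M noise_space noise_vec
     = distr M (borel \<Otimes>\<^sub>M noise_space) (\<lambda>\<omega>. (H \<omega>, noise_vec \<omega>))"
proof (rule distr_pair_eq_pair_distr[OF H_meas noise_vec_measurable])
  show "indep_set (sets (vimage_algebra (space M) noise_vec noise_space))
      (sets (vimage_algebra (space M) H borel))"
    using indep_H unfolding noise_vec_def noise_def .
qed

lemma real_cond_exp_sigma_H:
  fixes \<phi> :: "(real ^ 'k) \<times> (nat \<Rightarrow> real) \<Rightarrow> real"
  assumes "\<phi> \<in> borel_measurable (borel \<Otimes>\<^sub>M noise_space)"
    and "integrable M (\<lambda>\<omega>. \<phi> (H \<omega>, noise_vec \<omega>))"
  shows "AE \<omega> in M. real_cond_exp M sigma_H (\<lambda>\<omega>. \<phi> (H \<omega>, noise_vec \<omega>)) \<omega>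
           = (\<integral>n. \<phi> (H \<omega>, n) \<partial>noise_law)"
  unfolding sigma_H_def noise_law_def
  by (rule real_cond_exp_indep_pair[OF H_meas noise_vec_measurable H_noise_indep assms])

lemma integral_H_noise:
  fixes \<phi> :: "(real ^ 'k) \<times> (nat \<Rightarrow> real) \<Rightarrow> real"
  assumes "\<phi> \<in> borel_measurable (borel \<Otimes>\<^sub>M noise_space)"
    and "integrable M (\<lambda>\<omega>. \<phi> (H \<omega>, noise_vec \<omega>))"
  shows "(\<integral>\<omega>. \<phi> (H \<omega>, noise_vec \<omega>) \<partial>M) = (\<integral>\<omega>. (\<integral>n. \<phi> (H \<omega>, n) \<partial>noise_law) \<partial>M)"
  unfolding noise_law_def
  by (rule integral_indep_pair(2)[OF H_meas noise_vec_measurable H_noise_indep assms])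

lemma H_measurable_sigma_H: "H \<in> measurable sigma_H borel"
  unfolding sigma_H_def by (rule measurable_vimage_algebra1) (use H_meas in \<open>auto simp: measurable_def\<close>)

lemma sigma_finite_subalgebra_sigma_H: "sigma_finite_subalgebra M sigma_H"
  unfolding sigma_H_def by (rule sigma_finite_subalgebra_vimage_algebra[OF H_meas])

definition conf_effect :: "real ^ 'k \<Rightarrow> nat \<Rightarrow> real" where
  "conf_effect h = restrict (\<lambda>j. gX j h) {1..Suc p}"

definition X_sol :: "(nat \<Rightarrow> real) \<Rightarrow> (nat \<Rightarrow> real) \<Rightarrow> nat \<Rightarrow> real" where
  "X_sol a n = restrict (solve_X fX p a n) {1..p}"

definition prop_X :: "(nat \<Rightarrow> real) \<Rightarrow> (nat \<Rightarrow> real) \<Rightarrow> real" where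
  "prop_X a n = inv_one_plus_exp (fX (Suc p) (X_sol a n))"

definition propensity :: "(nat \<Rightarrow> real) \<Rightarrow> (nat \<Rightarrow> real) \<Rightarrow> real" where
  "propensity a n = prop_X a n * inv_one_plus_exp (a (Suc p))"

definition D_sol :: "(nat \<Rightarrow> real) \<Rightarrow> (nat \<Rightarrow> real) \<Rightarrow> real" where
  "D_sol a n = (if n (Suc p) \<le> propensity a n then 1 else 0)"

lemma solve_X_eq_X:
  assumes \<omega>: "\<omega> \<in> space M"
  shows "j \<le> p \<Longrightarrow> i \<in> {1..j} \<Longrightarrow> solve_X fX j (conf_effect (H \<omega>)) (noise_vec \<omega>) i = X i \<omega>"
proof (induction j arbitrary: i)
  case (Suc j)
  have IH: "\<And>i. i \<in> {1..j} \<Longrightarrow> solve_X fX j (conf_effect (H \<omega>)) (noise_vec \<omega>) i = X i \<omega>"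
    using Suc by auto
  show ?case
  proof (cases "i = Suc j")
    case True
    have prefix: "restrict (solve_X fX j (conf_effect (H \<omega>)) (noise_vec \<omega>)) {1..<Suc j}
        = restrict (\<lambda>i. X i \<omega>) {1..<Suc j}"
      using IH by (auto simp: restrict_def)
    have "conf_effect (H \<omega>) (Suc j) = gX (Suc j) (H \<omega>)" "noise_vec \<omega> (Suc j) = epsX (Suc j) \<omega>"
      using Suc.prems by (auto simp: conf_effect_def noise_vec_epsX)
    moreover have "X (Suc j) \<omega> = fX (Suc j) (restrict (\<lambda>i. X i \<omega>) {1..<Suc j}) + gX (Suc j) (H \<omega>)
        + epsX (Suc j) \<omega>" if "j \<noteq> 0"
      using Xj[OF _ \<omega>, of "Suc j"] Suc.prems that by auto
    ultimately show ?thesis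
      using True prefix X1[OF \<omega>] by (cases "j = 0") auto
  qed (use Suc.prems IH in auto)
qed simp

lemma X_sol_eq: "\<omega> \<in> space M \<Longrightarrow> X_sol (conf_effect (H \<omega>)) (noise_vec \<omega>) = restrict (\<lambda>i. X i \<omega>) {1..p}"
  unfolding X_sol_def using solve_X_eq_X by (auto simp: restrict_def)

lemma D_eq_D_sol: "\<omega> \<in> space M \<Longrightarrow> D \<omega> = D_sol (conf_effect (H \<omega>)) (noise_vec \<omega>)"
  unfolding D_sol_def propensity_def prop_X_def using D_def X_sol_eq noise_vec_V
  by (simp add: conf_effect_def inv_one_plus_exp_def)

lemma Y_eq_sol: "\<omega> \<in> space M \<Longrightarrow>
    Y \<omega> = fY (X_sol (conf_effect (H \<omega>)) (noise_vec \<omega>)) (D_sol (conf_effect (H \<omega>)) (noise_vec \<omega>))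
      + gY (H \<omega>) + eps \<omega>"
  using Y_def X_sol_eq D_eq_D_sol by simp

lemma X_eq_sol:
  assumes "j \<in> {1..p}" "\<omega> \<in> space M"
  shows "X j \<omega> = (if j = 1 then 0
      else fX j (restrict (solve_X fX (j - 1) (conf_effect (H \<omega>)) (noise_vec \<omega>)) {1..<j}))
    + gX j (H \<omega>) + noise_vec \<omega> j"
proof -
  obtain j' where j': "j = Suc j'" using assms by (cases j) auto
  have "X j \<omega> = solve_X fX j (conf_effect (H \<omega>)) (noise_vec \<omega>) j"
    using solve_X_eq_X[OF assms(2), of j j] assms by simp
  then show ?thesis using assms by (simp add: j' conf_effect_def)
qed

text \<open>Measurability is shown for arbitrary measurable parametrisations of the effects and the
  noise, as it is needed both for fixed effects and jointly in effects and noise.\<close>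

context
  fixes Q :: "'q measure" and fa fn :: "'q \<Rightarrow> nat \<Rightarrow> real"
  assumes fa: "\<And>i. i \<in> {1..Suc p} \<Longrightarrow> (\<lambda>x. fa x i) \<in> borel_measurable Q"
    and fn: "\<And>i. i \<in> {0..Suc p} \<Longrightarrow> (\<lambda>x. fn x i) \<in> borel_measurable Q"
begin

lemma measurable_solve_X: "j \<le> p \<Longrightarrow> (\<lambda>x. solve_X fX j (fa x) (fn x) i) \<in> borel_measurable Q"
  by (rule solve_X_measurable[where q="Suc p", OF fX_meas]) (auto intro: fa fn)

lemma measurable_X_sol: "(\<lambda>x. X_sol (fa x) (fn x)) \<in> measurable Q (PiM {1..p} (\<lambda>_. borel))"
  unfolding X_sol_def by (intro measurable_restrict measurable_solve_X) simp

lemma measurable_fX_sol: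
  assumes "j \<in> {2..Suc p}"
  shows "(\<lambda>x. fX j (restrict (solve_X fX (j - 1) (fa x) (fn x)) {1..<j})) \<in> borel_measurable Q"
proof (rule measurable_compose[OF _ fX_meas[OF assms]])
  show "(\<lambda>x. restrict (solve_X fX (j - 1) (fa x) (fn x)) {1..<j})
      \<in> measurable Q (PiM {1..<j} (\<lambda>_. borel))"
    using assms by (intro measurable_restrict measurable_solve_X) auto
qed

lemma measurable_prop_X: "(\<lambda>x. prop_X (fa x) (fn x)) \<in> borel_measurable Q"
proof -
  have "(\<lambda>x. fX (Suc p) (X_sol (fa x) (fn x))) \<in> borel_measurable Q"
    using measurable_fX_sol[of "Suc p"] p
    by (simp add: X_sol_def atLeastLessThanSuc_atLeastAtMost)
  then show ?thesis unfolding prop_X_def by measurable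
qed

lemma measurable_propensity: "(\<lambda>x. propensity (fa x) (fn x)) \<in> borel_measurable Q"
  unfolding propensity_def using measurable_prop_X fa[of "Suc p"] by measurable

lemma measurable_D_sol: "(\<lambda>x. D_sol (fa x) (fn x)) \<in> borel_measurable Q"
  unfolding D_sol_def using measurable_propensity fn[of "Suc p"] by measurable

lemma measurable_fY_sol: "(\<lambda>x. fY (X_sol (fa x) (fn x)) (D_sol (fa x) (fn x))) \<in> borel_measurable Q"
proof -
  have "(\<lambda>x. (X_sol (fa x) (fn x), D_sol (fa x) (fn x)))
      \<in> measurable Q (PiM {1..p} (\<lambda>_. borel) \<Otimes>\<^sub>M borel)"
    using measurable_X_sol measurable_D_sol by measurable
  from measurable_compose[OF this fY_meas] show ?thesis by simp
qed

end

lemma conf_effect_measurable [measurable]: "conf_effect \<in> measurable borel effect_space"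
  unfolding conf_effect_def using gX_meas by measurable

lemma conf_effect_fst_component:
  "i \<in> {1..Suc p} \<Longrightarrow> (\<lambda>x. conf_effect (fst x) i) \<in> borel_measurable (borel \<Otimes>\<^sub>M noise_space)"
  unfolding conf_effect_def using gX_meas by (simp add: measurable_compose[OF measurable_fst])

lemma snd_component: "(\<lambda>x. snd x i) \<in> borel_measurable (N \<Otimes>\<^sub>M noise_space)" if "i \<in> {0..Suc p}"
  using that by measurable

lemma fst_component: "(\<lambda>x. fst x i) \<in> borel_measurable (effect_space \<Otimes>\<^sub>M N)" if "i \<in> {1..Suc p}"
  using that by measurable

lemma noise_component: "(\<lambda>n. n i) \<in> borel_measurable noise_space" if "i \<in> {0..Suc p}"
  using that by measurable

lemma measurable_sol_conf_effect:
  shows "(\<lambda>(h, n). X_sol (conf_effect h) n)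
           \<in> measurable (borel \<Otimes>\<^sub>M noise_space) (PiM {1..p} (\<lambda>_. borel))"
    and "(\<lambda>(h, n). D_sol (conf_effect h) n) \<in> borel_measurable (borel \<Otimes>\<^sub>M noise_space)"
    and "(\<lambda>(h, n). fY (X_sol (conf_effect h) n) (D_sol (conf_effect h) n))
           \<in> borel_measurable (borel \<Otimes>\<^sub>M noise_space)"
    and "j \<in> {2..Suc p} \<Longrightarrow> (\<lambda>(h, n). fX j (restrict (solve_X fX (j - 1) (conf_effect h) n) {1..<j}))
           \<in> borel_measurable (borel \<Otimes>\<^sub>M noise_space)"
  unfolding case_prod_beta'
  by (rule measurable_X_sol measurable_D_sol measurable_fY_sol measurable_fX_sol;
      auto intro: conf_effect_fst_component snd_component)+

section \<open>Conditional means given the confounder\<close>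

definition mean_fX :: "nat \<Rightarrow> (nat \<Rightarrow> real) \<Rightarrow> real" where
  "mean_fX j a = (\<integral>n. fX j (restrict (solve_X fX (j - 1) a n) {1..<j}) \<partial>noise_law)"

definition mean_X :: "nat \<Rightarrow> (nat \<Rightarrow> real) \<Rightarrow> real" where
  "mean_X j a = (if j = 1 then 0 else mean_fX j a) + a j"

definition mean_prop_X :: "(nat \<Rightarrow> real) \<Rightarrow> real" where
  "mean_prop_X a = (\<integral>n. prop_X a n \<partial>noise_law)"

definition mean_fY :: "(nat \<Rightarrow> real) \<Rightarrow> real" where
  "mean_fY a = (\<integral>n. fY (X_sol a n) (D_sol a n) \<partial>noise_law)"

lemma real_cond_exp_noise:
  assumes i: "i \<in> {0..Suc p}" and "integrable M (noise i)" and "expectation (noise i) = 0"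
  shows "AE \<omega> in M. real_cond_exp M sigma_H (noise i) \<omega> = 0"
proof -
  interpret sigma_finite_subalgebra M sigma_H by (rule sigma_finite_subalgebra_sigma_H)
  have [measurable]: "(\<lambda>(h::real ^ 'k, n). n i) \<in> borel_measurable (borel \<Otimes>\<^sub>M noise_space)"
    using i by measurable
  have int: "integrable M (\<lambda>\<omega>. (\<lambda>(h, n). n i) (H \<omega>, noise_vec \<omega>))"
    using assms(2) by (rule Bochner_Integration.integrable_cong[OF refl, THEN iffD1, rotated])
      (simp add: noise_vec_apply[OF i])
  have "AE \<omega> in M. real_cond_exp M sigma_H (noise i) \<omega>
      = real_cond_exp M sigma_H (\<lambda>\<omega>. (\<lambda>(h, n). n i) (H \<omega>, noise_vec \<omega>)) \<omega>"
    by (intro real_cond_exp_cong) (auto simp: noise_vec_apply[OF i])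
  moreover have "AE \<omega> in M. real_cond_exp M sigma_H (\<lambda>\<omega>. (\<lambda>(h, n). n i) (H \<omega>, noise_vec \<omega>)) \<omega>
      = (\<integral>n. n i \<partial>noise_law)"
    using real_cond_exp_sigma_H[OF _ int] by simp
  moreover have "(\<integral>n. n i \<partial>noise_law) = expectation (noise i)"
    unfolding noise_law_def using i by (subst integral_distr) (auto simp: noise_vec_apply)
  ultimately show ?thesis using assms by auto
qed

lemma real_cond_exp_X:
  assumes j: "j \<in> {1..p}"
  shows "AE \<omega> in M. real_cond_exp M sigma_H (X j) \<omega> = mean_X j (conf_effect (H \<omega>))"
proof -
  interpret sigma_finite_subalgebra M sigma_H by (rule sigma_finite_subalgebra_sigma_H)
  define \<phi> where "\<phi> = (\<lambda>(h, n). if j = 1 then 0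
      else fX j (restrict (solve_X fX (j - 1) (conf_effect h) n) {1..<j}))"
  have \<phi>_meas: "\<phi> \<in> borel_measurable (borel \<Otimes>\<^sub>M noise_space)"
  proof (cases "j = 1")
    case False
    then have "j \<in> {2..Suc p}" using j by auto
    with measurable_sol_conf_effect(4) show ?thesis by (simp add: \<phi>_def)
  qed (simp add: \<phi>_def)
  have prefix: "\<And>\<omega>. \<omega> \<in> space M \<Longrightarrow>
      restrict (solve_X fX (j - 1) (conf_effect (H \<omega>)) (noise_vec \<omega>)) {1..<j}
      = restrict (\<lambda>i. X i \<omega>) {1..<j}"
  proof (rule ext)
    fix \<omega> i assume "\<omega> \<in> space M"
    then show "restrict (solve_X fX (j - 1) (conf_effect (H \<omega>)) (noise_vec \<omega>)) {1..<j} i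
        = restrict (\<lambda>i. X i \<omega>) {1..<j} i"
      using solve_X_eq_X[of \<omega> "j - 1" i] j by (auto simp: restrict_def)
  qed
  have int_\<phi>: "integrable M (\<lambda>\<omega>. \<phi> (H \<omega>, noise_vec \<omega>))"
  proof (cases "j = 1")
    case False
    then have "j \<in> {2..p}" using j by auto
    from fX_int[OF this] show ?thesis
      by (rule Bochner_Integration.integrable_cong[OF refl, THEN iffD1, rotated])
        (use False in \<open>simp add: \<phi>_def prefix[simplified]\<close>)
  qed (simp add: \<phi>_def)
  have coef_j: "\<And>h. conf_effect h j = gX j h"
    using j by (simp add: conf_effect_def)
  have int_noise: "integrable M (noise j)" using epsX_int[OF j] j by (simp add: noise_def)
  have "AE \<omega> in M. real_cond_exp M sigma_H (X j) \<omega>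
      = real_cond_exp M sigma_H (\<lambda>\<omega>. \<phi> (H \<omega>, noise_vec \<omega>)) \<omega>
      + real_cond_exp M sigma_H (\<lambda>\<omega>. gX j (H \<omega>)) \<omega> + real_cond_exp M sigma_H (noise j) \<omega>"
    using int_\<phi> gX_int[OF j] int_noise borel_measurable_integrable[OF X_int[OF j]]
    by (rule real_cond_exp_add3) (use j in \<open>simp add: X_eq_sol[OF j] \<phi>_def noise_vec_apply\<close>)
  moreover have "AE \<omega> in M. real_cond_exp M sigma_H (\<lambda>\<omega>. \<phi> (H \<omega>, noise_vec \<omega>)) \<omega>
      = (\<integral>n. \<phi> (H \<omega>, n) \<partial>noise_law)"
    by (rule real_cond_exp_sigma_H[OF \<phi>_meas int_\<phi>])
  moreover have "AE \<omega> in M. real_cond_exp M sigma_H (\<lambda>\<omega>. gX j (H \<omega>)) \<omega> = gX j (H \<omega>)"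
    using gX_int[OF j] measurable_compose[OF H_measurable_sigma_H gX_meas] j
    by (intro real_cond_exp_F_meas) auto
  moreover have "AE \<omega> in M. real_cond_exp M sigma_H (noise j) \<omega> = 0"
    using j int_noise epsX_mean[OF j] by (intro real_cond_exp_noise) (auto simp: noise_def)
  ultimately show ?thesis
    by eventually_elim (simp add: \<phi>_def mean_fX_def mean_X_def coef_j)
qed

lemma integral_noise_law_split:
  fixes f :: "(nat \<Rightarrow> real) \<Rightarrow> real"
  assumes k: "k \<in> {0..Suc p}" and f: "f \<in> borel_measurable noise_space" and bound: "\<And>n. \<bar>f n\<bar> \<le> B"
  shows "(\<integral>n. f n \<partial>noise_law)
    = (\<integral>x. (\<integral>y. f (x(k := y)) \<partial>noise_marginal k) \<partial>PiM ({0..Suc p} - {k}) noise_marginal)"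
proof -
  have split: "{0..Suc p} = insert k ({0..Suc p} - {k})" using k by auto
  have sets_eq: "sets (PiM {0..Suc p} noise_marginal) = sets noise_space"
    by (rule sets_PiM_cong) (simp_all add: noise_marginal_def)
  have "f \<in> borel_measurable (PiM {0..Suc p} noise_marginal)"
    by (subst measurable_cong_sets[OF sets_eq refl]) (fact f)
  then have "f \<in> borel_measurable (PiM (insert k ({0..Suc p} - {k})) noise_marginal)"
    by (simp only: split[symmetric])
  then have "(\<integral>n. f n \<partial>PiM (insert k ({0..Suc p} - {k})) noise_marginal)
      = (\<integral>x. (\<integral>y. f (x(k := y)) \<partial>noise_marginal k) \<partial>PiM ({0..Suc p} - {k}) noise_marginal)"
    by (rule integral_PiM_insert_bounded[where B=B, rotated 3])
      (simp_all add: prob_space_noise_marginal bound)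
  then show ?thesis
    unfolding noise_law_eq_PiM by (simp only: split[symmetric])
qed

text \<open>Integrating out the uniform variable \<open>V\<close>, which the propensity does not depend on.\<close>

lemma integral_D_sol: "(\<integral>n. D_sol a n \<partial>noise_law) = mean_prop_X a * inv_one_plus_exp (a (Suc p))"
proof -
  let ?PiR = "PiM ({0..Suc p} - {Suc p}) noise_marginal"
  have propensity_upd: "\<And>x y. propensity a (x(Suc p := y)) = propensity a x"
    unfolding propensity_def prop_X_def X_sol_def by (subst solve_X_cong[of p _ a _ x]) auto
  have propensity_bounds: "\<And>x. 0 \<le> propensity a x \<and> propensity a x \<le> 1"
    unfolding propensity_def prop_X_def
    by (intro conjI mult_le_one mult_nonneg_nonneg less_imp_le
        inv_one_plus_exp_pos inv_one_plus_exp_le_1)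
  have D_meas: "D_sol a \<in> borel_measurable noise_space"
    by (rule measurable_D_sol[where fn="\<lambda>n. n"]) (auto intro: noise_component)
  have propensity_meas: "propensity a \<in> borel_measurable noise_space"
    by (rule measurable_propensity[where fn="\<lambda>n. n"]) (auto intro: noise_component)
  have "(\<integral>n. D_sol a n \<partial>noise_law) = (\<integral>x. (\<integral>y. D_sol a (x(Suc p := y)) \<partial>noise_marginal (Suc p)) \<partial>?PiR)"
    using D_meas by (rule integral_noise_law_split[where B=1, rotated]) (simp_all add: D_sol_def)
  also have "\<dots> = (\<integral>x. propensity a x \<partial>?PiR)"
    using propensity_bounds
    by (simp add: D_sol_def propensity_upd noise_marginal_V integral_uniform_01_le)
  also have "\<dots> = (\<integral>x. (\<integral>y. propensity a (x(Suc p := y)) \<partial>noise_marginal (Suc p)) \<partial>?PiR)"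
    using prob_space.prob_space[OF prob_space_noise_marginal] by (simp add: propensity_upd)
  also have "\<dots> = (\<integral>n. propensity a n \<partial>noise_law)"
    using propensity_meas propensity_bounds
    by (intro integral_noise_law_split[where B=1, symmetric]) auto
  finally show ?thesis
    unfolding propensity_def mean_prop_X_def by simp
qed

lemma real_cond_exp_D:
  "AE \<omega> in M. real_cond_exp M sigma_H D \<omega>
     = mean_prop_X (conf_effect (H \<omega>)) * inv_one_plus_exp (conf_effect (H \<omega>) (Suc p))"
proof -
  interpret sigma_finite_subalgebra M sigma_H by (rule sigma_finite_subalgebra_sigma_H)
  have meas: "(\<lambda>(h, n). D_sol (conf_effect h) n) \<in> borel_measurable (borel \<Otimes>\<^sub>M noise_space)"
    by (rule measurable_sol_conf_effect(2))
  have int: "integrable M (\<lambda>\<omega>. (\<lambda>(h, n). D_sol (conf_effect h) n) (H \<omega>, noise_vec \<omega>))"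
    using D_int by (rule Bochner_Integration.integrable_cong[OF refl, THEN iffD1, rotated])
      (simp add: D_eq_D_sol)
  have "AE \<omega> in M. real_cond_exp M sigma_H D \<omega>
      = real_cond_exp M sigma_H (\<lambda>\<omega>. (\<lambda>(h, n). D_sol (conf_effect h) n) (H \<omega>, noise_vec \<omega>)) \<omega>"
    using D_int measurable_compose[OF measurable_Pair[OF H_meas noise_vec_measurable] meas]
    by (intro real_cond_exp_cong) (auto simp: D_eq_D_sol borel_measurable_integrable)
  with real_cond_exp_sigma_H[OF meas int] show ?thesis
    by eventually_elim (simp add: integral_D_sol)
qed

lemma real_cond_exp_Y:
  "AE \<omega> in M. real_cond_exp M sigma_H Y \<omega> = mean_fY (conf_effect (H \<omega>)) + gY (H \<omega>)"
proof -
  interpret sigma_finite_subalgebra M sigma_H by (rule sigma_finite_subalgebra_sigma_H)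
  define \<phi> where "\<phi> = (\<lambda>(h, n). fY (X_sol (conf_effect h) n) (D_sol (conf_effect h) n))"
  have \<phi>_meas: "\<phi> \<in> borel_measurable (borel \<Otimes>\<^sub>M noise_space)"
    unfolding \<phi>_def by (rule measurable_sol_conf_effect(3))
  have int_\<phi>: "integrable M (\<lambda>\<omega>. \<phi> (H \<omega>, noise_vec \<omega>))"
    using fY_int by (rule Bochner_Integration.integrable_cong[OF refl, THEN iffD1, rotated])
      (simp add: \<phi>_def X_sol_eq D_eq_D_sol)
  have int_eps: "integrable M (noise 0)" using eps_int by (simp add: noise_def)
  have "AE \<omega> in M. real_cond_exp M sigma_H Y \<omega> = real_cond_exp M sigma_H (\<lambda>\<omega>. \<phi> (H \<omega>, noise_vec \<omega>)) \<omega>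
      + real_cond_exp M sigma_H (\<lambda>\<omega>. gY (H \<omega>)) \<omega> + real_cond_exp M sigma_H (noise 0) \<omega>"
    using int_\<phi> gY_int int_eps borel_measurable_integrable[OF Y_int]
    by (rule real_cond_exp_add3) (simp add: Y_eq_sol \<phi>_def noise_def)
  moreover have "AE \<omega> in M. real_cond_exp M sigma_H (\<lambda>\<omega>. \<phi> (H \<omega>, noise_vec \<omega>)) \<omega>
      = (\<integral>n. \<phi> (H \<omega>, n) \<partial>noise_law)"
    by (rule real_cond_exp_sigma_H[OF \<phi>_meas int_\<phi>])
  moreover have "AE \<omega> in M. real_cond_exp M sigma_H (\<lambda>\<omega>. gY (H \<omega>)) \<omega> = gY (H \<omega>)"
    using gY_int measurable_compose[OF H_measurable_sigma_H gY_meas] by (rule real_cond_exp_F_meas)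
  moreover have "AE \<omega> in M. real_cond_exp M sigma_H (noise 0) \<omega> = 0"
    using int_eps eps_mean by (intro real_cond_exp_noise) (auto simp: noise_def)
  ultimately show ?thesis
    by eventually_elim (simp add: \<phi>_def mean_fY_def)
qed

section \<open>Recovering the confounder effects from the conditional means\<close>

lemma mean_prop_X_pos: "0 < mean_prop_X a"
proof -
  interpret noise_law: prob_space noise_law by (rule prob_space_noise_law)
  have meas: "prop_X a \<in> borel_measurable noise_law"
    using measurable_prop_X[where fn="\<lambda>n. n", OF _ noise_component]
    by (simp add: measurable_cong_sets[OF sets_noise_law refl])
  have pos: "\<And>n. 0 < prop_X a n"
    unfolding prop_X_def by (rule inv_one_plus_exp_pos)
  have int: "integrable noise_law (prop_X a)"
    using meas by (intro noise_law.integrable_const_bound[where B=1])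
      (auto simp: prop_X_def inv_one_plus_exp_le_1 less_imp_le[OF inv_one_plus_exp_pos])
  have "mean_prop_X a \<noteq> 0"
  proof
    assume "mean_prop_X a = 0"
    then have "AE n in noise_law. prop_X a n = 0"
      unfolding mean_prop_X_def using int pos
      by (subst (asm) integral_nonneg_eq_0_iff_AE) (auto intro: less_imp_le)
    then have "AE n in noise_law. False"
      by eventually_elim (metis pos less_irrefl)
    then show False by simp
  qed
  moreover have "0 \<le> mean_prop_X a"
    unfolding mean_prop_X_def using pos by (intro integral_nonneg_AE) (auto intro: less_imp_le)
  ultimately show ?thesis by simp
qed

lemma mean_fX_cong:
  assumes "\<And>i. i \<in> {1..<j} \<Longrightarrow> a i = b i"
  shows "mean_fX j a = mean_fX j b"
proof -
  have "\<And>n. solve_X fX (j - 1) a n = solve_X fX (j - 1) b n"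
    by (rule solve_X_cong) (auto simp: assms)
  then show ?thesis by (simp add: mean_fX_def)
qed

lemma mean_prop_X_cong:
  assumes "\<And>i. i \<in> {1..p} \<Longrightarrow> a i = b i"
  shows "mean_prop_X a = mean_prop_X b"
proof -
  have "\<And>n. solve_X fX p a n = solve_X fX p b n"
    by (rule solve_X_cong) (auto simp: assms)
  then show ?thesis by (simp add: mean_prop_X_def prop_X_def X_sol_def)
qed

fun effects_of_means :: "nat \<Rightarrow> (nat \<Rightarrow> real) \<Rightarrow> nat \<Rightarrow> real" where
  "effects_of_means 0 s = (\<lambda>i. 0)"
| "effects_of_means (Suc j) s = (effects_of_means j s)(Suc j :=
     s (Suc j) - (if j = 0 then 0 else mean_fX (Suc j) (restrict (effects_of_means j s) {1..Suc p})))"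

definition recover_conf_effect :: "(nat \<Rightarrow> real) \<Rightarrow> real \<Rightarrow> nat \<Rightarrow> real" where
  "recover_conf_effect s d = restrict ((effects_of_means p s)(Suc p :=
     ln (mean_prop_X (restrict (effects_of_means p s) {1..Suc p}) / d - 1))) {1..Suc p}"

lemma effects_of_means_eq:
  assumes s: "\<And>j. j \<in> {1..p} \<Longrightarrow> s j = mean_X j a"
  shows "j \<le> p \<Longrightarrow> i \<in> {1..j} \<Longrightarrow> effects_of_means j s i = a i"
proof (induction j arbitrary: i)
  case (Suc j)
  have IH: "\<And>i. i \<in> {1..j} \<Longrightarrow> effects_of_means j s i = a i" using Suc by auto
  have "mean_fX (Suc j) (restrict (effects_of_means j s) {1..Suc p}) = mean_fX (Suc j) a"
    by (rule mean_fX_cong) (use IH Suc.prems in auto)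
  moreover have "s (Suc j) = mean_X (Suc j) a" using s Suc.prems by auto
  ultimately show ?case
    using Suc.prems IH by (cases "i = Suc j") (auto simp: mean_X_def)
qed simp

lemma recover_conf_effect_eq:
  assumes a: "a \<in> extensional {1..Suc p}" and s: "\<And>j. j \<in> {1..p} \<Longrightarrow> s j = mean_X j a"
  shows "recover_conf_effect s (mean_prop_X a * inv_one_plus_exp (a (Suc p))) = a"
proof (rule ext)
  fix i
  let ?c = "effects_of_means p s"
  have c: "\<And>i. i \<in> {1..p} \<Longrightarrow> ?c i = a i"
    using effects_of_means_eq[OF s] by auto
  have "mean_prop_X (restrict ?c {1..Suc p}) = mean_prop_X a"
    by (rule mean_prop_X_cong) (simp add: c)
  moreover have "ln (mean_prop_X a / (mean_prop_X a * inv_one_plus_exp (a (Suc p))) - 1) = a (Suc p)"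
    using mean_prop_X_pos[of a] by (simp add: inv_one_plus_exp_def field_simps add_pos_pos)
  ultimately show "recover_conf_effect s (mean_prop_X a * inv_one_plus_exp (a (Suc p))) i = a i"
    using c extensional_arb[OF a] unfolding recover_conf_effect_def
    by (cases "i = Suc p") (auto simp: restrict_def)
qed

lemma measurable_integral_noise_law:
  fixes \<phi> :: "'b \<Rightarrow> (nat \<Rightarrow> real) \<Rightarrow> real"
  shows "(\<lambda>(x, n). \<phi> x n) \<in> borel_measurable (N \<Otimes>\<^sub>M noise_space) \<Longrightarrow>
    (\<lambda>x. \<integral>n. \<phi> x n \<partial>noise_law) \<in> borel_measurable N"
  using prob_space_imp_sigma_finite[OF prob_space_noise_law] sets_noise_law
  by (rule sigma_finite_measure.borel_measurable_integral_snd)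

lemma measurable_mean_fX: "j \<in> {2..Suc p} \<Longrightarrow> mean_fX j \<in> borel_measurable effect_space"
  unfolding mean_fX_def using measurable_fX_sol[where fa=fst and fn=snd, OF fst_component snd_component]
  by (intro measurable_integral_noise_law) (simp add: case_prod_beta')

lemma measurable_mean_prop_X [measurable]: "mean_prop_X \<in> borel_measurable effect_space"
  unfolding mean_prop_X_def
  using measurable_prop_X[where fa=fst and fn=snd, OF fst_component snd_component]
  by (intro measurable_integral_noise_law) (simp add: case_prod_beta')

lemma measurable_mean_fY [measurable]: "mean_fY \<in> borel_measurable effect_space"
  unfolding mean_fY_def using measurable_fY_sol[where fa=fst and fn=snd, OF fst_component snd_component]
  by (intro measurable_integral_noise_law) (simp add: case_prod_beta')

lemma measurable_effects_of_means:
  assumes s: "\<And>i. i \<in> {1..p} \<Longrightarrow> (\<lambda>x. s x i) \<in> borel_measurable Q"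
  shows "j \<le> p \<Longrightarrow> (\<lambda>x. effects_of_means j (s x) i) \<in> borel_measurable Q"
proof (induction j arbitrary: i)
  case (Suc j)
  have IH: "\<And>i. (\<lambda>x. effects_of_means j (s x) i) \<in> borel_measurable Q" using Suc by auto
  then have prefix: "(\<lambda>x. restrict (effects_of_means j (s x)) {1..Suc p}) \<in> measurable Q effect_space"
    by (intro measurable_restrict) simp
  have "(\<lambda>x. if j = 0 then 0 else mean_fX (Suc j) (restrict (effects_of_means j (s x)) {1..Suc p}))
      \<in> borel_measurable Q"
  proof (cases "j = 0")
    case False
    then have "Suc j \<in> {2..Suc p}" using Suc.prems by auto
    with False show ?thesis using measurable_compose[OF prefix measurable_mean_fX] by simp
  qed simp
  moreover have "(\<lambda>x. s x (Suc j)) \<in> borel_measurable Q" using s Suc.prems by auto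
  ultimately have "(\<lambda>x. s x (Suc j) - (if j = 0 then 0
        else mean_fX (Suc j) (restrict (effects_of_means j (s x)) {1..Suc p}))) \<in> borel_measurable Q"
    by measurable
  then show ?case
    using IH[of i] by (cases "i = Suc j") auto
qed simp

lemma measurable_recover_conf_effect:
  "(\<lambda>(s, d). recover_conf_effect s d) \<in> measurable (PiM {1..p} (\<lambda>_. borel) \<Otimes>\<^sub>M borel) effect_space"
proof -
  let ?Q = "PiM {1..p} (\<lambda>_. borel :: real measure) \<Otimes>\<^sub>M (borel :: real measure)"
  have c: "\<And>i. (\<lambda>x. effects_of_means p (fst x) i) \<in> borel_measurable ?Q"
    by (rule measurable_effects_of_means) auto
  then have "(\<lambda>x. restrict (effects_of_means p (fst x)) {1..Suc p}) \<in> measurable ?Q effect_space"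
    by (intro measurable_restrict) simp
  then have "(\<lambda>x. ln (mean_prop_X (restrict (effects_of_means p (fst x)) {1..Suc p}) / snd x - 1))
      \<in> borel_measurable ?Q"
    by measurable
  with c have "(\<lambda>x. ((effects_of_means p (fst x))(Suc p :=
      ln (mean_prop_X (restrict (effects_of_means p (fst x)) {1..Suc p}) / snd x - 1))) i)
      \<in> borel_measurable ?Q" for i
    by (cases "i = Suc p") auto
  then show ?thesis
    unfolding recover_conf_effect_def case_prod_beta by (intro measurable_restrict) simp
qed

section \<open>Proxy sufficiency\<close>

abbreviation cond_space ::
    "((nat \<Rightarrow> real) \<times> (nat \<Rightarrow> real) \<times> real \<times> real) measure" where
  "cond_space \<equiv> PiM {1..p} (\<lambda>_. borel) \<Otimes>\<^sub>M PiM {1..p} (\<lambda>_. borel) \<Otimes>\<^sub>M borel \<Otimes>\<^sub>M borel"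

definition cond_vec :: "'a \<Rightarrow> (nat \<Rightarrow> real) \<times> (nat \<Rightarrow> real) \<times> real \<times> real" where
  "cond_vec \<omega> = (restrict (\<lambda>i. X i \<omega>) {1..p}, restrict (\<lambda>i. real_cond_exp M sigma_H (X i) \<omega>) {1..p},
     real_cond_exp M sigma_H D \<omega>, D \<omega>)"

definition cond_vec_sol :: "real ^ 'k \<Rightarrow> (nat \<Rightarrow> real) \<Rightarrow> (nat \<Rightarrow> real) \<times> (nat \<Rightarrow> real) \<times> real \<times> real" where
  "cond_vec_sol h n = (X_sol (conf_effect h) n, restrict (\<lambda>i. mean_X i (conf_effect h)) {1..p},
     mean_prop_X (conf_effect h) * inv_one_plus_exp (conf_effect h (Suc p)), D_sol (conf_effect h) n)"

definition resid_of_cond :: "(nat \<Rightarrow> real) \<times> (nat \<Rightarrow> real) \<times> real \<times> real \<Rightarrow> real" where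
  "resid_of_cond = (\<lambda>(x, m, e, d). fY x d - mean_fY (recover_conf_effect m e))"

definition resid_cond_prob :: "real set \<Rightarrow> (nat \<Rightarrow> real) \<times> (nat \<Rightarrow> real) \<times> real \<times> real \<Rightarrow> real" where
  "resid_cond_prob S c = (\<integral>e. indicator S (resid_of_cond c + e) \<partial>noise_marginal 0)"

lemma measurable_cond_vec [measurable]: "cond_vec \<in> measurable M cond_space"
proof -
  have X: "\<And>i. i \<in> {1..p} \<Longrightarrow> X i \<in> borel_measurable M"
    using X_int by (auto intro: borel_measurable_integrable)
  have [measurable]: "D \<in> borel_measurable M"
    using D_int by (rule borel_measurable_integrable)
  have "(\<lambda>\<omega>. restrict (\<lambda>i. X i \<omega>) {1..p}) \<in> measurable M (PiM {1..p} (\<lambda>_. borel))"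
    by (rule measurable_restrict) (rule X)
  moreover have "(\<lambda>\<omega>. restrict (\<lambda>i. real_cond_exp M sigma_H (X i) \<omega>) {1..p})
      \<in> measurable M (PiM {1..p} (\<lambda>_. borel))"
    by (rule measurable_restrict) simp
  ultimately show ?thesis unfolding cond_vec_def by measurable
qed

lemma measurable_resid_of_cond [measurable]: "resid_of_cond \<in> borel_measurable cond_space"
proof -
  have obs: "(\<lambda>c. (fst c, snd (snd (snd c))))
      \<in> measurable cond_space (PiM {1..p} (\<lambda>_. borel) \<Otimes>\<^sub>M borel)"
    by measurable
  have means: "(\<lambda>c. (fst (snd c), fst (snd (snd c))))
      \<in> measurable cond_space (PiM {1..p} (\<lambda>_. borel) \<Otimes>\<^sub>M borel)"
    by measurable
  have "(\<lambda>c. fY (fst c) (snd (snd (snd c)))) \<in> borel_measurable cond_space"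
    using measurable_compose[OF obs fY_meas] by simp
  moreover have "(\<lambda>c. mean_fY (recover_conf_effect (fst (snd c)) (fst (snd (snd c)))))
      \<in> borel_measurable cond_space"
    using measurable_compose[OF measurable_compose[OF means measurable_recover_conf_effect]
        measurable_mean_fY]
    by simp
  ultimately show ?thesis
    unfolding resid_of_cond_def case_prod_beta' by measurable
qed

lemma measurable_cond_vec_sol:
  "(\<lambda>(h, n). cond_vec_sol h n) \<in> measurable (borel \<Otimes>\<^sub>M noise_space) cond_space"
proof -
  have mean_X_meas: "(\<lambda>h. mean_X i (conf_effect h)) \<in> borel_measurable borel" if i: "i \<in> {1..p}" for i
  proof -
    have "(\<lambda>h. conf_effect h i) \<in> borel_measurable borel"
      using i gX_meas by (simp add: conf_effect_def)
    moreover have "i \<noteq> 1 \<Longrightarrow> (\<lambda>h. mean_fX i (conf_effect h)) \<in> borel_measurable borel"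
      using i by (intro measurable_compose[OF conf_effect_measurable measurable_mean_fX]) auto
    ultimately show ?thesis
      unfolding mean_X_def by (cases "i = 1") auto
  qed
  have "(\<lambda>h. restrict (\<lambda>i. mean_X i (conf_effect h)) {1..p})
      \<in> measurable borel (PiM {1..p} (\<lambda>_. borel))"
    by (rule measurable_restrict) (rule mean_X_meas)
  moreover have "(\<lambda>h. mean_prop_X (conf_effect h) * inv_one_plus_exp (conf_effect h (Suc p)))
      \<in> borel_measurable borel"
    using measurable_compose[OF conf_effect_measurable measurable_mean_prop_X] gX_meas[of "Suc p"]
    by (simp add: conf_effect_def)
  moreover note measurable_sol_conf_effect(1,2)[unfolded case_prod_beta']
  ultimately show ?thesis
    unfolding cond_vec_sol_def case_prod_beta by measurable
qed

lemma cond_vec_eq_sol: "AE \<omega> in M. cond_vec \<omega> = cond_vec_sol (H \<omega>) (noise_vec \<omega>)"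
proof -
  have "AE \<omega> in M. \<forall>j\<in>{1..p}. real_cond_exp M sigma_H (X j) \<omega> = mean_X j (conf_effect (H \<omega>))"
    by (rule AE_finite_allI) (auto intro: real_cond_exp_X)
  with real_cond_exp_D AE_space show ?thesis
  proof eventually_elim
    case (elim \<omega>)
    then have "restrict (\<lambda>i. real_cond_exp M sigma_H (X i) \<omega>) {1..p}
        = restrict (\<lambda>i. mean_X i (conf_effect (H \<omega>))) {1..p}"
      by (auto simp: restrict_def)
    with elim show ?case
      unfolding cond_vec_def cond_vec_sol_def by (simp add: X_sol_eq D_eq_D_sol)
  qed
qed

lemma resid_of_cond_cond_vec_sol:
  "resid_of_cond (cond_vec_sol h n)
     = fY (X_sol (conf_effect h) n) (D_sol (conf_effect h) n) - mean_fY (conf_effect h)"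
proof -
  have "recover_conf_effect (restrict (\<lambda>i. mean_X i (conf_effect h)) {1..p})
      (mean_prop_X (conf_effect h) * inv_one_plus_exp (conf_effect h (Suc p))) = conf_effect h"
    by (rule recover_conf_effect_eq) (auto simp: conf_effect_def)
  then show ?thesis unfolding resid_of_cond_def cond_vec_sol_def by simp
qed

lemma resid_eq: "AE \<omega> in M. Y \<omega> - real_cond_exp M sigma_H Y \<omega> = resid_of_cond (cond_vec \<omega>) + eps \<omega>"
  using cond_vec_eq_sol real_cond_exp_Y AE_space
  by eventually_elim (simp add: resid_of_cond_cond_vec_sol Y_eq_sol)

lemma resid_cond_prob_bounds: "0 \<le> resid_cond_prob S c" "resid_cond_prob S c \<le> 1"
proof -
  have "(\<lambda>e. indicator S (resid_of_cond c + e) :: real) = indicator ((\<lambda>e. resid_of_cond c + e) -` S)"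
    by (auto simp: fun_eq_iff split: split_indicator)
  then have "resid_cond_prob S c
      = measure (noise_marginal 0) ((\<lambda>e. resid_of_cond c + e) -` S \<inter> space (noise_marginal 0))"
    unfolding resid_cond_prob_def by simp
  then show "0 \<le> resid_cond_prob S c" "resid_cond_prob S c \<le> 1"
    using prob_space.prob_le_1[OF prob_space_noise_marginal] by simp_all
qed

lemma measurable_resid_cond_prob:
  assumes [measurable]: "S \<in> sets borel"
  shows "resid_cond_prob S \<in> borel_measurable cond_space"
  unfolding resid_cond_prob_def
  by (intro sigma_finite_measure.borel_measurable_integral_snd[where MN=borel]
      prob_space_imp_sigma_finite prob_space_noise_marginal) (simp add: noise_marginal_def, measurable)

lemma cond_vec_sol_upd_0: "cond_vec_sol h (n(0 := e)) = cond_vec_sol h n"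
proof -
  have "X_sol a (n(0 := e)) = X_sol a n" for a
    unfolding X_sol_def by (subst solve_X_cong[of p _ a _ n]) auto
  then show ?thesis
    unfolding cond_vec_sol_def D_sol_def propensity_def prop_X_def by simp
qed

lemma integral_noise_law_resid:
  assumes [measurable]: "U \<in> sets cond_space" "S \<in> sets borel"
  shows "(\<integral>n. indicator U (cond_vec_sol h n) * indicator S (resid_of_cond (cond_vec_sol h n) + n 0)
      \<partial>noise_law)
    = (\<integral>n. indicator U (cond_vec_sol h n) * resid_cond_prob S (cond_vec_sol h n) \<partial>noise_law)"
proof -
  note measurable_resid_cond_prob [measurable]
  have [measurable]: "cond_vec_sol h \<in> measurable noise_space cond_space"
    using measurable_Pair2[OF measurable_cond_vec_sol, of h] by simp
  have "(\<integral>n. indicator U (cond_vec_sol h n) * indicator S (resid_of_cond (cond_vec_sol h n) + n 0)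
      \<partial>noise_law)
      = (\<integral>x. (\<integral>e. (indicator U (cond_vec_sol h x) * indicator S (resid_of_cond (cond_vec_sol h x) + e)
          :: real) \<partial>noise_marginal 0) \<partial>PiM ({0..Suc p} - {0}) noise_marginal)"
    by (subst integral_noise_law_split[where k=0 and B=1])
      (auto simp: cond_vec_sol_upd_0 split: split_indicator)
  also have "\<dots> = (\<integral>x. (\<integral>e. indicator U (cond_vec_sol h (x(0 := e)))
          * resid_cond_prob S (cond_vec_sol h (x(0 := e))) \<partial>noise_marginal 0)
        \<partial>PiM ({0..Suc p} - {0}) noise_marginal)"
    using prob_space.prob_space[OF prob_space_noise_marginal]
    by (simp add: cond_vec_sol_upd_0 resid_cond_prob_def)
  also have "\<dots> = (\<integral>n. indicator U (cond_vec_sol h n) * resid_cond_prob S (cond_vec_sol h n) \<partial>noise_law)"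
    using resid_cond_prob_bounds
    by (subst integral_noise_law_split[where k=0 and B=1]) (auto split: split_indicator)
  finally show ?thesis .
qed

text \<open>Up to a null set, \<open>(cond_vec, H)\<close> is a function of \<open>H\<close> and of the noise coordinates other
  than \<open>\<epsilon>\<close>, so \<open>\<epsilon>\<close> can be integrated out first.\<close>

lemma integral_resid_indicator:
  assumes U [measurable]: "U \<in> sets cond_space"
    and T [measurable]: "T \<in> sets (borel :: (real ^ 'k) measure)"
    and S [measurable]: "S \<in> sets (borel :: real measure)"
  shows "(\<integral>\<omega>. indicator U (cond_vec \<omega>) * indicator T (H \<omega>)
           * indicator S (resid_of_cond (cond_vec \<omega>) + eps \<omega>) \<partial>M)
       = (\<integral>\<omega>. indicator U (cond_vec \<omega>) * indicator T (H \<omega>) * resid_cond_prob S (cond_vec \<omega>) \<partial>M)"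
proof -
  note measurable_cond_vec_sol [measurable] measurable_resid_cond_prob [measurable]
  define \<phi>\<^sub>1 :: "(real ^ 'k) \<times> (nat \<Rightarrow> real) \<Rightarrow> real" where
    "\<phi>\<^sub>1 = (\<lambda>(h, n). indicator T h
      * (indicator U (cond_vec_sol h n) * indicator S (resid_of_cond (cond_vec_sol h n) + n 0)))"
  define \<phi>\<^sub>2 :: "(real ^ 'k) \<times> (nat \<Rightarrow> real) \<Rightarrow> real" where
    "\<phi>\<^sub>2 = (\<lambda>(h, n). indicator T h
      * (indicator U (cond_vec_sol h n) * resid_cond_prob S (cond_vec_sol h n)))"
  have [measurable]: "\<phi>\<^sub>1 \<in> borel_measurable (borel \<Otimes>\<^sub>M noise_space)"
    "\<phi>\<^sub>2 \<in> borel_measurable (borel \<Otimes>\<^sub>M noise_space)"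
    unfolding \<phi>\<^sub>1_def \<phi>\<^sub>2_def by measurable
  have bound: "\<bar>\<phi>\<^sub>1 x\<bar> \<le> 1" "\<bar>\<phi>\<^sub>2 x\<bar> \<le> 1" for x
    using resid_cond_prob_bounds unfolding \<phi>\<^sub>1_def \<phi>\<^sub>2_def
    by (auto simp: case_prod_beta split: split_indicator)
  have int: "integrable M (\<lambda>\<omega>. \<phi>\<^sub>1 (H \<omega>, noise_vec \<omega>))" "integrable M (\<lambda>\<omega>. \<phi>\<^sub>2 (H \<omega>, noise_vec \<omega>))"
    using bound H_meas by (auto intro!: integrable_const_bound[where B=1])
  have "(\<integral>\<omega>. indicator U (cond_vec \<omega>) * indicator T (H \<omega>)
        * indicator S (resid_of_cond (cond_vec \<omega>) + eps \<omega>) \<partial>M)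
      = (\<integral>\<omega>. \<phi>\<^sub>1 (H \<omega>, noise_vec \<omega>) \<partial>M)"
    using cond_vec_eq_sol eps_meas H_meas
    by (intro integral_cong_AE) (auto elim!: eventually_mono simp: \<phi>\<^sub>1_def noise_vec_0 mult_ac)
  also have "\<dots> = (\<integral>\<omega>. (\<integral>n. \<phi>\<^sub>1 (H \<omega>, n) \<partial>noise_law) \<partial>M)"
    by (rule integral_H_noise) (simp_all add: int)
  also have "\<dots> = (\<integral>\<omega>. (\<integral>n. \<phi>\<^sub>2 (H \<omega>, n) \<partial>noise_law) \<partial>M)"
    by (simp add: \<phi>\<^sub>1_def \<phi>\<^sub>2_def integral_noise_law_resid[OF U S])
  also have "\<dots> = (\<integral>\<omega>. \<phi>\<^sub>2 (H \<omega>, noise_vec \<omega>) \<partial>M)"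
    by (rule integral_H_noise[symmetric]) (simp_all add: int)
  also have "\<dots> = (\<integral>\<omega>. indicator U (cond_vec \<omega>) * indicator T (H \<omega>) * resid_cond_prob S (cond_vec \<omega>) \<partial>M)"
    using cond_vec_eq_sol H_meas
    by (intro integral_cong_AE) (auto elim!: eventually_mono simp: \<phi>\<^sub>2_def mult_ac)
  finally show ?thesis .
qed

lemma cond_indep_resid_H:
  "cond_indep M borel (\<lambda>\<omega>. Y \<omega> - real_cond_exp M sigma_H Y \<omega>) borel H cond_space cond_vec"
proof (rule cond_indepI_cond_prob[where \<psi>=resid_cond_prob])
  have Y [measurable]: "Y \<in> borel_measurable M"
    using Y_int by (rule borel_measurable_integrable)
  show "(\<lambda>\<omega>. Y \<omega> - real_cond_exp M sigma_H Y \<omega>) \<in> borel_measurable M"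
    by measurable
  show "H \<in> borel_measurable M" by (rule H_meas)
  show "cond_vec \<in> measurable M cond_space" by (rule measurable_cond_vec)
  show "\<And>S. S \<in> sets borel \<Longrightarrow> resid_cond_prob S \<in> borel_measurable cond_space"
    by (rule measurable_resid_cond_prob)
  show "\<And>S c. \<bar>resid_cond_prob S c\<bar> \<le> 1"
    using resid_cond_prob_bounds by (simp add: abs_le_iff)
  fix S :: "real set" and U :: "((nat \<Rightarrow> real) \<times> (nat \<Rightarrow> real) \<times> real \<times> real) set"
    and T :: "(real ^ 'k) set"
  assume S [measurable]: "S \<in> sets borel" and U [measurable]: "U \<in> sets cond_space"
    and T [measurable]: "T \<in> sets borel"
  have "(\<integral>\<omega>. (indicator U (cond_vec \<omega>) * indicator T (H \<omega>)
        * indicator S (Y \<omega> - real_cond_exp M sigma_H Y \<omega>) :: real) \<partial>M)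
      = (\<integral>\<omega>. indicator U (cond_vec \<omega>) * indicator T (H \<omega>)
        * indicator S (resid_of_cond (cond_vec \<omega>) + eps \<omega>) \<partial>M)"
    using resid_eq eps_meas H_meas by (intro integral_cong_AE) (auto elim!: eventually_mono)
  also have "\<dots> = (\<integral>\<omega>. indicator U (cond_vec \<omega>) * indicator T (H \<omega>) * resid_cond_prob S (cond_vec \<omega>) \<partial>M)"
    by (rule integral_resid_indicator[OF U T S])
  finally show "(\<integral>\<omega>. indicator U (cond_vec \<omega>) * indicator T (H \<omega>)
        * indicator S (Y \<omega> - real_cond_exp M sigma_H Y \<omega>) \<partial>M)
      = (\<integral>\<omega>. indicator U (cond_vec \<omega>) * indicator T (H \<omega>) * resid_cond_prob S (cond_vec \<omega>) \<partial>M)" .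
qed

end

theorem mainTheorem6:
  fixes M :: "'a measure"
    and p :: nat
    and H :: "'a \<Rightarrow> real ^ 'k"
    and eps V :: "'a \<Rightarrow> real"
    and epsX :: "nat \<Rightarrow> 'a \<Rightarrow> real"
    and fX :: "nat \<Rightarrow> (nat \<Rightarrow> real) \<Rightarrow> real"
    and fY :: "(nat \<Rightarrow> real) \<Rightarrow> real \<Rightarrow> real"
    and gX :: "nat \<Rightarrow> real ^ 'k \<Rightarrow> real"
    and gY :: "real ^ 'k \<Rightarrow> real"
    and X :: "nat \<Rightarrow> 'a \<Rightarrow> real"
    and D Y :: "'a \<Rightarrow> real"
  assumes P: "prob_space M"
    and p: "1 \<le> p"
    \<comment> \<open>random variables\<close>
    and H_meas: "H \<in> borel_measurable M"
    and eps_meas: "eps \<in> borel_measurable M"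
    and V_meas: "V \<in> borel_measurable M"
    and epsX_meas: "\<And>j. j \<in> {1..p} \<Longrightarrow> epsX j \<in> borel_measurable M"
    \<comment> \<open>eps, eps_1..eps_p, V mutually independent, and jointly independent of H\<close>
    and indep_noise: "prob_space.indep_vars M (\<lambda>_. borel)
        (\<lambda>i. if i = 0 then eps else if i \<le> p then epsX i else V) {0..Suc p}"
    and indep_H: "prob_space.indep_set M
        (sets (vimage_algebra (space M)
          (\<lambda>\<omega>. restrict (\<lambda>i. (if i = 0 then eps else if i \<le> p then epsX i else V) \<omega>) {0..Suc p})
          (PiM {0..Suc p} (\<lambda>_. borel))))
        (sets (vimage_algebra (space M) H borel))"
    \<comment> \<open>mean zero noise\<close>
    and eps_int: "integrable M eps" and eps_mean: "prob_space.expectation M eps = 0"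
    and epsX_int: "\<And>j. j \<in> {1..p} \<Longrightarrow> integrable M (epsX j)"
    and epsX_mean: "\<And>j. j \<in> {1..p} \<Longrightarrow> prob_space.expectation M (epsX j) = 0"
    \<comment> \<open>V ~ Uniform(0,1)\<close>
    and V_unif: "distr M borel V = uniform_measure lborel {0..1}"
    \<comment> \<open>measurable structural functions; f_j depends on (X_1,...,X_{j-1})\<close>
    and fX_meas: "\<And>j. j \<in> {2..Suc p} \<Longrightarrow> fX j \<in> borel_measurable (PiM {1..<j} (\<lambda>_. borel))"
    and fY_meas: "(\<lambda>(x, d). fY x d) \<in> borel_measurable (PiM {1..p} (\<lambda>_. borel) \<Otimes>\<^sub>M borel)"
    and gX_meas: "\<And>j. j \<in> {1..Suc p} \<Longrightarrow> gX j \<in> borel_measurable borel"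
    and gY_meas: "gY \<in> borel_measurable borel"
    \<comment> \<open>structural equations\<close>
    and X1: "\<And>\<omega>. \<omega> \<in> space M \<Longrightarrow> X 1 \<omega> = gX 1 (H \<omega>) + epsX 1 \<omega>"
    and Xj: "\<And>j \<omega>. j \<in> {2..p} \<Longrightarrow> \<omega> \<in> space M \<Longrightarrow>
        X j \<omega> = fX j (restrict (\<lambda>i. X i \<omega>) {1..<j}) + gX j (H \<omega>) + epsX j \<omega>"
    and D_def: "\<And>\<omega>. \<omega> \<in> space M \<Longrightarrow>
        D \<omega> = (if V \<omega> \<le> 1 / ((1 + exp (fX (Suc p) (restrict (\<lambda>i. X i \<omega>) {1..p})))
                               * (1 + exp (gX (Suc p) (H \<omega>)))) then 1 else 0)"
    and Y_def: "\<And>\<omega>. \<omega> \<in> space M \<Longrightarrow>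
        Y \<omega> = fY (restrict (\<lambda>i. X i \<omega>) {1..p}) (D \<omega>) + gY (H \<omega>) + eps \<omega>"
    \<comment> \<open>all random variables involved are integrable\<close>
    and X_int: "\<And>j. j \<in> {1..p} \<Longrightarrow> integrable M (X j)"
    and Y_int: "integrable M Y"
    and D_int: "integrable M D"
    and fX_int: "\<And>j. j \<in> {2..p} \<Longrightarrow> integrable M (\<lambda>\<omega>. fX j (restrict (\<lambda>i. X i \<omega>) {1..<j}))"
    and fY_int: "integrable M (\<lambda>\<omega>. fY (restrict (\<lambda>i. X i \<omega>) {1..p}) (D \<omega>))"
    and gX_int: "\<And>j. j \<in> {1..p} \<Longrightarrow> integrable M (\<lambda>\<omega>. gX j (H \<omega>))"
    and gY_int: "integrable M (\<lambda>\<omega>. gY (H \<omega>))"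
  shows "cond_indep M
           borel (\<lambda>\<omega>. Y \<omega> - real_cond_exp M (vimage_algebra (space M) H borel) Y \<omega>)
           borel H
           (PiM {1..p} (\<lambda>_. borel) \<Otimes>\<^sub>M PiM {1..p} (\<lambda>_. borel) \<Otimes>\<^sub>M borel \<Otimes>\<^sub>M borel)
           (\<lambda>\<omega>. (restrict (\<lambda>i. X i \<omega>) {1..p},
                  restrict (\<lambda>i. real_cond_exp M (vimage_algebra (space M) H borel) (X i) \<omega>) {1..p},
                  real_cond_exp M (vimage_algebra (space M) H borel) D \<omega>,
                  D \<omega>))"
proof -
  interpret proxy_model M p H eps V epsX fX fY gX gY X D Y
    by (intro proxy_model.intro proxy_model_axioms.intro) (fact assms)+
  show ?thesis
    using cond_indep_resid_H unfolding cond_vec_def[abs_def] sigma_H_def .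
qed

end
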